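(* Let $n\geq 2$. The structure $\mathbf{D}_{n,<_1,\ldots,<_n}=(D_n,<,<_1,\ldots,<_n)$ is ultrahomogeneous and its age is $\mathcal{PO}_{n,<_1,\ldots,<_n}$. Consequently, $\mathcal{PO}_{n,<_1,\ldots,<_n}$ is a Fra\"iss\'e class and $\mathbf{D}_{n,<_1,\ldots,<_n}$ is its Fra\"iss\'e limit.
   Context: Fix $n\geq 2$ and a set $D_n\subseteq\mathbb{Q}^n$ which is dense in $\mathbb{Q}^n$ (product topology) and such that no two distinct points of $D_n$ share a common coordinate. On $D_n$, $<$ is the product order ($\mathbf{a}<\mathbf{b}$ iff $a_i\leq b_i$ for all $i$ and $\mathbf{a}\neq\mathbf{b}$) and $<_i$ is the $i$th coordinate order ($\mathbf{a}<_i\mathbf{b}$ iff $a_i<b_i$). Structures are in the signature of $n+1$ binary relation symbols; embeddings are injective maps preserving and reflecting each relation, substructures are subsets with the induced relations. An $n$-dimensional partial order with realizers is a structure $(P,<,<_1,\ldots,<_n)$ where $<_1,\ldots,<_n$ are linear (strict) orders on $P$ and $<$ equals $<_1\cap\cdots\cap<_n$ (i.e. $a<b$ iff $a<_ib$ for all $i$). $\mathcal{PO}_{n,<_1,\ldots,<_n}$ is the class of all finite such structures. A structure is ultrahomogeneous if every isomorphism between finite substructures extends to an automorphism. The age of a structure $\mathbf{M}$ is the class of all finite structures in the same signature embeddable in $\mathbf{M}$. A Fra\"iss\'e class is a nonempty class of finite structures satisfying the hereditary property (closed under structures embeddable into members), joint embedding property (any two members embed into a common member) and amalgamation property (for embeddings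 $e:\mathbf{A}\to\mathbf{B}$, $f:\mathbf{A}\to\mathbf{C}$ of members there are a member $\mathbf{D}$ and embeddings $g:\mathbf{B}\to\mathbf{D}$, $h:\mathbf{C}\to\mathbf{D}$ with $g\circ e=h\circ f$); its Fra\"iss\'e limit is the unique (up to isomorphism) countable ultrahomogeneous structure whose age is the class. *)

theory Defs
  imports Main "HOL-Library.Countable_Set" "HOL-Library.Cardinality"
begin

text \<open>For the signature of the paper (n+1 binary symbols) we use 'i = 'n option,
  where None stands for the product order symbol and Some i for the i-th
  coordinate order symbol.\<close>

type_synonym ('a, 'i) struct = "'a set \<times> ('i \<Rightarrow> 'a \<Rightarrow> 'a \<Rightarrow> bool)"

definition carrier :: "('a, 'i) struct \<Rightarrow> 'a set" where
  "carrier A = fst A"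

definition rel :: "('a, 'i) struct \<Rightarrow> 'i \<Rightarrow> 'a \<Rightarrow> 'a \<Rightarrow> bool" where
  "rel A = snd A"

definition embedding :: "('a \<Rightarrow> 'b) \<Rightarrow> ('a, 'i) struct \<Rightarrow> ('b, 'i) struct \<Rightarrow> bool" where
  "embedding f A B \<longleftrightarrow>
     f ` carrier A \<subseteq> carrier B \<and> inj_on f (carrier A) \<and>
     (\<forall>i. \<forall>x\<in>carrier A. \<forall>y\<in>carrier A. rel A i x y \<longleftrightarrow> rel B i (f x) (f y))"

definition partial_iso :: "('a, 'i) struct \<Rightarrow> 'a set \<Rightarrow> 'a set \<Rightarrow> ('a \<Rightarrow> 'a) \<Rightarrow> bool" where
  "partial_iso M X Y h \<longleftrightarrow>
     X \<subseteq> carrier M \<and> Y \<subseteq> carrier M \<and> bij_betw h X Y \<and>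
     (\<forall>i. \<forall>x\<in>X. \<forall>y\<in>X. rel M i x y \<longleftrightarrow> rel M i (h x) (h y))"

definition automorphism :: "('a, 'i) struct \<Rightarrow> ('a \<Rightarrow> 'a) \<Rightarrow> bool" where
  "automorphism M g \<longleftrightarrow> embedding g M M \<and> g ` carrier M = carrier M"

definition ultrahomogeneous :: "('a, 'i) struct \<Rightarrow> bool" where
  "ultrahomogeneous M \<longleftrightarrow>
     (\<forall>X Y h. finite X \<and> partial_iso M X Y h \<longrightarrow>
        (\<exists>g. automorphism M g \<and> (\<forall>x\<in>X. g x = h x)))"

definition in_age :: "('b, 'i) struct \<Rightarrow> ('a, 'i) struct \<Rightarrow> bool" where
  "in_age M A \<longleftrightarrow> finite (carrier A) \<and> (\<exists>f. embedding f A M)"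

definition strict_linear_on :: "'a set \<Rightarrow> ('a \<Rightarrow> 'a \<Rightarrow> bool) \<Rightarrow> bool" where
  "strict_linear_on S R \<longleftrightarrow>
     (\<forall>x\<in>S. \<not> R x x) \<and>
     (\<forall>x\<in>S. \<forall>y\<in>S. \<forall>z\<in>S. R x y \<and> R y z \<longrightarrow> R x z) \<and>
     (\<forall>x\<in>S. \<forall>y\<in>S. x \<noteq> y \<longrightarrow> R x y \<or> R y x)"

text \<open>The class PO_{n,<_1,...,<_n}: finite n-dimensional partial orders with
  realizers, where n = CARD('n).\<close>
definition in_PO :: "('a, 'n option) struct \<Rightarrow> bool" where
  "in_PO A \<longleftrightarrow> finite (carrier A) \<and>
     (\<forall>i. strict_linear_on (carrier A) (rel A (Some i))) \<and>
     (\<forall>x\<in>carrier A. \<forall>y\<in>carrier A. rel A None x y \<longleftrightarrow> (\<forall>i. rel A (Some i) x y))"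

text \<open>Points of Q^n are functions 'n \<Rightarrow> rat.  The structure D_{n,<_1,...,<_n}.\<close>
definition Dstruct :: "('n \<Rightarrow> rat) set \<Rightarrow> ('n \<Rightarrow> rat, 'n option) struct" where
  "Dstruct D = (D, (\<lambda>r a b. case r of
        None \<Rightarrow> (\<forall>i. a i \<le> b i) \<and> a \<noteq> b
      | Some i \<Rightarrow> a i < b i))"

text \<open>Density in Q^n with the product topology: every nonempty basic open box
  meets D.\<close>
definition dense_in_Qn :: "('n \<Rightarrow> rat) set \<Rightarrow> bool" where
  "dense_in_Qn D \<longleftrightarrow>
     (\<forall>lo hi :: 'n \<Rightarrow> rat. (\<forall>i. lo i < hi i) \<longrightarrow>
        (\<exists>d\<in>D. \<forall>i. lo i < d i \<and> d i < hi i))"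

end

theory Submission
  imports Defs
begin

text \<open>
  No two points of \<open>D\<close> share a coordinate, so the product order of \<open>D\<close> is the
  intersection of its coordinate orders, and a finite partial isomorphism of \<open>D\<close> is just a
  finite set of pairs \<open>(x, y)\<close> on which every coordinate order of the \<open>x\<close>'s agrees with that
  of the \<open>y\<close>'s. Such a set can be extended by any new point \<open>a\<close>: in each coordinate the pairs
  confine the image of \<open>a\<close> to an open interval, and density of \<open>D\<close> in \<open>\<rat>\<^sup>n\<close> provides an image
  in the product of these intervals. A back-and-forth argument along an enumeration of \<open>D\<close>
  gives ultrahomogeneity. A finite order with realizers embeds into \<open>D\<close> by placing each point
  near its vector of ranks in the realizers, and substructures of \<open>D\<close> inherit realizers, so the
  age of \<open>D\<close> is \<open>PO\<close>. Joint embedding and amalgamation are carried out inside \<open>D\<close>; for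
  amalgamation an automorphism first moves one copy of the common substructure onto the other.
\<close>

section \<open>Back and forth\<close>

definition partial_iso_graph :: "('a, 'i) struct \<Rightarrow> ('a \<times> 'a) set \<Rightarrow> bool" where
  "partial_iso_graph M P \<longleftrightarrow> P \<subseteq> carrier M \<times> carrier M \<and>
     (\<forall>(x, y)\<in>P. \<forall>(x', y')\<in>P. (x = x' \<longleftrightarrow> y = y') \<and> (\<forall>r. rel M r x x' \<longleftrightarrow> rel M r y y'))"

lemma partial_iso_graphI:
  assumes "P \<subseteq> carrier M \<times> carrier M"
    and "\<And>x y x' y'. (x, y) \<in> P \<Longrightarrow> (x', y') \<in> P \<Longrightarrow>
      (x = x' \<longleftrightarrow> y = y') \<and> (\<forall>r. rel M r x x' \<longleftrightarrow> rel M r y y')"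
  shows "partial_iso_graph M P"
  using assms unfolding partial_iso_graph_def by blast

lemma partial_iso_graph_subset: "partial_iso_graph M P \<Longrightarrow> P \<subseteq> carrier M \<times> carrier M"
  unfolding partial_iso_graph_def by blast

lemma
  assumes "partial_iso_graph M P" "(x, y) \<in> P" "(x', y') \<in> P"
  shows partial_iso_graph_eq_iff: "x = x' \<longleftrightarrow> y = y'"
    and partial_iso_graph_rel_iff: "rel M r x x' \<longleftrightarrow> rel M r y y'"
  using assms unfolding partial_iso_graph_def by fastforce+

lemma partial_iso_graph_converseI:
  assumes P: "partial_iso_graph M P"
  shows "partial_iso_graph M (P\<inverse>)"
proof (rule partial_iso_graphI)
  show "P\<inverse> \<subseteq> carrier M \<times> carrier M"
    using partial_iso_graph_subset[OF P] by blast
next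
  fix x y x' y' assume "(x, y) \<in> P\<inverse>" "(x', y') \<in> P\<inverse>"
  then have "(y, x) \<in> P" "(y', x') \<in> P" by simp_all
  then show "(x = x' \<longleftrightarrow> y = y') \<and> (\<forall>r. rel M r x x' \<longleftrightarrow> rel M r y y')"
    using partial_iso_graph_eq_iff[OF P] partial_iso_graph_rel_iff[OF P] by blast
qed

lemma partial_iso_graph_converse [simp]:
  "partial_iso_graph M (P\<inverse>) \<longleftrightarrow> partial_iso_graph M P"
  using partial_iso_graph_converseI[of M "P\<inverse>"] partial_iso_graph_converseI[of M P] by auto

lemma partial_iso_graph_UN:
  fixes Ps :: "nat \<Rightarrow> ('a \<times> 'a) set"
  assumes Ps: "\<And>k. partial_iso_graph M (Ps k)" and "mono Ps"
  shows "partial_iso_graph M (\<Union>k. Ps k)"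
proof (rule partial_iso_graphI)
  show "(\<Union>k. Ps k) \<subseteq> carrier M \<times> carrier M"
    using Ps partial_iso_graph_subset by blast
next
  fix x y x' y' assume "(x, y) \<in> (\<Union>k. Ps k)" "(x', y') \<in> (\<Union>k. Ps k)"
  then obtain m n where "(x, y) \<in> Ps m" "(x', y') \<in> Ps n" by blast
  then have "(x, y) \<in> Ps (max m n)" "(x', y') \<in> Ps (max m n)"
    using monoD[OF \<open>mono Ps\<close>, of m "max m n"] monoD[OF \<open>mono Ps\<close>, of n "max m n"] by auto
  then show "(x = x' \<longleftrightarrow> y = y') \<and> (\<forall>r. rel M r x x' \<longleftrightarrow> rel M r y y')"
    using partial_iso_graph_eq_iff[OF Ps] partial_iso_graph_rel_iff[OF Ps] by blast
qed

lemma automorphism_if_total_partial_iso_graph: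
  assumes Q: "partial_iso_graph M Q" and dom: "fst ` Q = carrier M" and ran: "snd ` Q = carrier M"
  shows "\<exists>g. automorphism M g \<and> (\<forall>x y. (x, y) \<in> Q \<longrightarrow> g x = y)"
proof -
  define g where "g x = (SOME y. (x, y) \<in> Q)" for x
  have graph: "(x, g x) \<in> Q" if "x \<in> carrier M" for x
  proof -
    have "\<exists>y. (x, y) \<in> Q" using dom that by force
    then show ?thesis unfolding g_def by (rule someI_ex)
  qed
  have g_eq: "g x = y" if "(x, y) \<in> Q" for x y
  proof -
    have "x \<in> carrier M" using partial_iso_graph_subset[OF Q] that by blast
    then show ?thesis using partial_iso_graph_eq_iff[OF Q that graph] by blast
  qed
  have into: "g ` carrier M \<subseteq> carrier M"
    using graph partial_iso_graph_subset[OF Q] by blast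
  have "g ` carrier M = carrier M"
  proof (rule equalityI[OF into])
    show "carrier M \<subseteq> g ` carrier M"
    proof
      fix y assume "y \<in> carrier M"
      then obtain x where "(x, y) \<in> Q" using ran by force
      moreover have "x \<in> carrier M"
        using \<open>(x, y) \<in> Q\<close> partial_iso_graph_subset[OF Q] by blast
      ultimately show "y \<in> g ` carrier M"
        using g_eq by blast
    qed
  qed
  moreover have "inj_on g (carrier M)"
    using partial_iso_graph_eq_iff[OF Q graph graph] by (meson inj_onI)
  moreover have "rel M r x y \<longleftrightarrow> rel M r (g x) (g y)" if "x \<in> carrier M" "y \<in> carrier M" for r x y
    using partial_iso_graph_rel_iff[OF Q graph[OF that(1)] graph[OF that(2)]] .
  ultimately have "automorphism M g"
    unfolding automorphism_def embedding_def by (intro conjI allI ballI into) simp_all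
  with g_eq show ?thesis by blast
qed

definition extension_property :: "('a, 'i) struct \<Rightarrow> bool" where
  "extension_property M \<longleftrightarrow>
     (\<forall>P a. finite P \<and> partial_iso_graph M P \<and> a \<in> carrier M \<and> a \<notin> fst ` P \<longrightarrow>
        (\<exists>b. partial_iso_graph M (insert (a, b) P)))"

lemma back_and_forth_step:
  assumes forth: "extension_property M"
    and P: "finite P" "partial_iso_graph M P" and a: "a \<in> carrier M"
  shows "\<exists>P'. finite P' \<and> partial_iso_graph M P' \<and> P \<subseteq> P' \<and> a \<in> fst ` P' \<and> a \<in> snd ` P'"
proof -
  have extend: "\<exists>b. partial_iso_graph M (insert (a, b) P)"
    if "finite P" "partial_iso_graph M P" for P
  proof (cases "a \<in> fst ` P")
    case True
    then obtain b where "(a, b) \<in> P" by force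
    then show ?thesis using that by (metis insert_absorb)
  next
    case False
    then show ?thesis using forth that a unfolding extension_property_def by blast
  qed
  obtain b where P1: "partial_iso_graph M (insert (a, b) P)"
    using extend P by blast
  \<comment> \<open>The back step is the forth step for the converse graph.\<close>
  obtain c where "partial_iso_graph M (insert (a, c) ((insert (a, b) P)\<inverse>))"
    using extend[of "(insert (a, b) P)\<inverse>"] P1 P by auto
  moreover have "insert (a, c) ((insert (a, b) P)\<inverse>) = (insert (c, a) (insert (a, b) P))\<inverse>"
    by auto
  ultimately have "partial_iso_graph M (insert (c, a) (insert (a, b) P))"
    by simp
  then show ?thesis
    using P by (intro exI[of _ "insert (c, a) (insert (a, b) P)"]) force
qed

lemma back_and_forth:
  assumes countable: "countable (carrier M)" and forth: "extension_property M"
    and P0: "finite P0" "partial_iso_graph M P0"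
  shows "\<exists>Q. P0 \<subseteq> Q \<and> partial_iso_graph M Q \<and> fst ` Q = carrier M \<and> snd ` Q = carrier M"
proof (cases "carrier M = {}")
  case True
  then have "fst ` P0 = carrier M" "snd ` P0 = carrier M"
    using partial_iso_graph_subset[OF P0(2)] by auto
  with P0(2) show ?thesis
    by (intro exI[of _ P0]) simp
next
  case False
  define e where "e = from_nat_into (carrier M)"
  have e: "e k \<in> carrier M" for k
    unfolding e_def using from_nat_into[OF False] .
  define ext where "ext k P = (SOME P'. finite P' \<and> partial_iso_graph M P' \<and> P \<subseteq> P' \<and>
      e k \<in> fst ` P' \<and> e k \<in> snd ` P')" for k P
  have ext: "finite (ext k P) \<and> partial_iso_graph M (ext k P) \<and> P \<subseteq> ext k P \<and>
      e k \<in> fst ` ext k P \<and> e k \<in> snd ` ext k P"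
    if "finite P" "partial_iso_graph M P" for k P
    unfolding ext_def
    by (rule someI_ex, rule back_and_forth_step[OF forth that e])
  define Ps where "Ps = rec_nat P0 ext"
  have Ps_0: "Ps 0 = P0" and Ps_Suc: "Ps (Suc k) = ext k (Ps k)" for k
    by (simp_all add: Ps_def)
  have Ps: "finite (Ps k) \<and> partial_iso_graph M (Ps k)" for k
    by (induction k) (simp_all add: Ps_0 Ps_Suc P0 ext)
  then have "mono Ps"
    by (simp add: mono_iff_le_Suc Ps_Suc ext)
  define Q where "Q = (\<Union>k. Ps k)"
  have Q: "partial_iso_graph M Q"
    unfolding Q_def using partial_iso_graph_UN Ps \<open>mono Ps\<close> by blast
  have "carrier M \<subseteq> fst ` Q \<inter> snd ` Q"
  proof
    fix x assume "x \<in> carrier M"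
    then obtain k where "x = e k"
      using from_nat_into_surj[OF countable] unfolding e_def by metis
    then have "x \<in> fst ` Ps (Suc k) \<inter> snd ` Ps (Suc k)"
      using Ps ext by (simp add: Ps_Suc)
    then show "x \<in> fst ` Q \<inter> snd ` Q"
      unfolding Q_def by blast
  qed
  moreover have "fst ` Q \<subseteq> carrier M" "snd ` Q \<subseteq> carrier M"
    using partial_iso_graph_subset[OF Q] by auto
  ultimately have "fst ` Q = carrier M" "snd ` Q = carrier M"
    by blast+
  moreover have "P0 \<subseteq> Q"
    unfolding Q_def using Ps_0 by blast
  ultimately show ?thesis
    using Q by (intro exI[of _ Q]) simp
qed

lemma ultrahomogeneous_if_extension_property:
  assumes "countable (carrier M)" "extension_property M"
  shows "ultrahomogeneous M"
  unfolding ultrahomogeneous_def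
proof (intro allI impI, elim conjE)
  fix X Y h assume X: "finite X" and h: "partial_iso M X Y h"
  have inj: "inj_on h X"
    and rel: "\<And>r x x'. x \<in> X \<Longrightarrow> x' \<in> X \<Longrightarrow> rel M r x x' \<longleftrightarrow> rel M r (h x) (h x')"
    using h unfolding partial_iso_def bij_betw_def by auto
  have "partial_iso_graph M ((\<lambda>x. (x, h x)) ` X)"
  proof (rule partial_iso_graphI)
    show "(\<lambda>x. (x, h x)) ` X \<subseteq> carrier M \<times> carrier M"
      using h unfolding partial_iso_def bij_betw_def by auto
  next
    fix x y x' y' assume "(x, y) \<in> (\<lambda>x. (x, h x)) ` X" "(x', y') \<in> (\<lambda>x. (x, h x)) ` X"
    then have "x \<in> X" "x' \<in> X" and "y = h x" "y' = h x'" by auto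
    then show "(x = x' \<longleftrightarrow> y = y') \<and> (\<forall>r. rel M r x x' \<longleftrightarrow> rel M r y y')"
      using inj_on_eq_iff[OF inj] rel by simp
  qed
  from back_and_forth[OF assms finite_imageI[OF X] this]
  obtain Q where "(\<lambda>x. (x, h x)) ` X \<subseteq> Q" "partial_iso_graph M Q"
      "fst ` Q = carrier M" "snd ` Q = carrier M"
    by blast
  moreover from automorphism_if_total_partial_iso_graph[OF calculation(2-4)]
  obtain g where "automorphism M g" "\<And>x y. (x, y) \<in> Q \<Longrightarrow> g x = y"
    by blast
  ultimately show "\<exists>g. automorphism M g \<and> (\<forall>x\<in>X. g x = h x)"
    by (metis image_subset_iff)
qed

section \<open>Joint embedding and amalgamation in an age\<close>

lemma embedding_comp:
  "embedding f A B \<Longrightarrow> embedding g B C \<Longrightarrow> embedding (g \<circ> f) A C"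
  unfolding embedding_def by (auto simp: inj_on_def image_subset_iff)

text \<open>The amalgams in the Fraisse properties live on \<^typ>\<open>nat\<close>; \<^const>\<open>to_nat\<close> transports
  finite substructures of a structure with countable carrier type there.\<close>

definition substructure_on_nat :: "('a::countable, 'i) struct \<Rightarrow> 'a set \<Rightarrow> (nat, 'i) struct" where
  "substructure_on_nat M S = (to_nat ` S, \<lambda>r m m'. rel M r (from_nat m) (from_nat m'))"

lemma carrier_substructure_on_nat [simp]: "carrier (substructure_on_nat M S) = to_nat ` S"
  by (simp add: substructure_on_nat_def carrier_def)

lemma rel_substructure_on_nat [simp]:
  "rel (substructure_on_nat M S) r m m' \<longleftrightarrow> rel M r (from_nat m) (from_nat m')"
  by (simp add: substructure_on_nat_def rel_def)

lemma in_age_substructure_on_nat: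
  assumes "finite S" "S \<subseteq> carrier M"
  shows "in_age M (substructure_on_nat M S)"
proof -
  have "embedding from_nat (substructure_on_nat M S) M"
    using assms(2) unfolding embedding_def by (auto simp: inj_on_def)
  then show ?thesis
    using assms(1) unfolding in_age_def by auto
qed

lemma embedding_to_nat_substructure_on_nat:
  assumes "embedding \<phi> A M" "\<phi> ` carrier A \<subseteq> S"
  shows "embedding (to_nat \<circ> \<phi>) A (substructure_on_nat M S)"
  using assms unfolding embedding_def by (auto simp: inj_on_def)

lemma substructure_on_nat_joint_embedding:
  fixes M :: "('m::countable, 'i) struct"
  assumes g: "embedding g B M" and h: "embedding h C M"
    and fin: "finite (carrier B)" "finite (carrier C)"
  defines "E \<equiv> substructure_on_nat M (g ` carrier B \<union> h ` carrier C)"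
  shows "in_age M E \<and> embedding (to_nat \<circ> g) B E \<and> embedding (to_nat \<circ> h) C E"
proof -
  have "g ` carrier B \<union> h ` carrier C \<subseteq> carrier M"
    using g h unfolding embedding_def by blast
  then show ?thesis
    unfolding E_def using fin g h
    by (simp add: in_age_substructure_on_nat embedding_to_nat_substructure_on_nat)
qed

lemma age_joint_embedding_property:
  fixes M :: "('m::countable, 'i) struct"
  assumes "in_age M A" "in_age M B"
  shows "\<exists>(E :: (nat, 'i) struct) g h. in_age M E \<and> embedding g A E \<and> embedding h B E"
  using assms substructure_on_nat_joint_embedding unfolding in_age_def by metis

lemma partial_iso_embedding_images:
  assumes \<phi>: "embedding \<phi> A M" and \<psi>: "embedding \<psi> A M"
  shows "partial_iso M (\<phi> ` carrier A) (\<psi> ` carrier A) (\<psi> \<circ> inv_into (carrier A) \<phi>)"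
proof -
  have inj: "inj_on \<phi> (carrier A)" "inj_on \<psi> (carrier A)"
    using \<phi> \<psi> unfolding embedding_def by blast+
  have "bij_betw (inv_into (carrier A) \<phi>) (\<phi> ` carrier A) (carrier A)"
    using bij_betw_inv_into[OF inj_on_imp_bij_betw[OF inj(1)]] .
  then have "bij_betw (\<psi> \<circ> inv_into (carrier A) \<phi>) (\<phi> ` carrier A) (\<psi> ` carrier A)"
    using inj_on_imp_bij_betw[OF inj(2)] by (rule bij_betw_trans)
  moreover have "rel M r (\<phi> a) (\<phi> b) \<longleftrightarrow> rel M r (\<psi> a) (\<psi> b)"
    if "a \<in> carrier A" "b \<in> carrier A" for r a b
    using \<phi> \<psi> that unfolding embedding_def by blast
  ultimately show ?thesis
    using \<phi> \<psi> inv_into_f_f[OF inj(1)] unfolding partial_iso_def embedding_def by auto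
qed

lemma age_amalgamation_property:
  fixes M :: "('m::countable, 'i) struct"
  assumes M: "ultrahomogeneous M" and ages: "in_age M A" "in_age M B" "in_age M C"
    and e: "embedding e A B" and f: "embedding f A C"
  shows "\<exists>(E :: (nat, 'i) struct) g h. in_age M E \<and> embedding g B E \<and> embedding h C E \<and>
           (\<forall>x\<in>carrier A. g (e x) = h (f x))"
proof -
  obtain \<beta> \<gamma> where \<beta>: "embedding \<beta> B M" and \<gamma>: "embedding \<gamma> C M"
    and fin: "finite (carrier A)" "finite (carrier B)" "finite (carrier C)"
    using ages unfolding in_age_def by blast
  let ?\<phi> = "\<gamma> \<circ> f" and ?\<psi> = "\<beta> \<circ> e"
  have \<phi>: "embedding ?\<phi> A M" and \<psi>: "embedding ?\<psi> A M"
    using embedding_comp e f \<beta> \<gamma> by blast+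
  from M fin(1) partial_iso_embedding_images[OF \<phi> \<psi>]
  obtain \<sigma> where \<sigma>: "automorphism M \<sigma>"
    and \<sigma>_eq: "\<And>y. y \<in> ?\<phi> ` carrier A \<Longrightarrow> \<sigma> y = (?\<psi> \<circ> inv_into (carrier A) ?\<phi>) y"
    unfolding ultrahomogeneous_def by (metis finite_imageI)
  have inj: "inj_on ?\<phi> (carrier A)"
    using \<phi> unfolding embedding_def by blast
  have glue: "\<beta> (e x) = \<sigma> (\<gamma> (f x))" if "x \<in> carrier A" for x
    using \<sigma>_eq[of "?\<phi> x"] inv_into_f_f[OF inj that] that by simp
  have "embedding (\<sigma> \<circ> \<gamma>) C M"
    using embedding_comp[OF \<gamma>] \<sigma> unfolding automorphism_def by blast
  from substructure_on_nat_joint_embedding[OF \<beta> this fin(2,3)] glue show ?thesis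
    by fastforce
qed

section \<open>Linear orders\<close>

lemma strict_linear_on_inj_on:
  assumes "strict_linear_on T R" "f ` S \<subseteq> T" "inj_on f S"
  shows "strict_linear_on S (\<lambda>x y. R (f x) (f y))"
proof -
  have fT: "f x \<in> T" if "x \<in> S" for x using assms(2) that by blast
  show ?thesis
    using assms(1) fT inj_onD[OF assms(3)] unfolding strict_linear_on_def by meson
qed

lemma strict_linear_on_cong:
  "(\<And>x y. x \<in> S \<Longrightarrow> y \<in> S \<Longrightarrow> R x y \<longleftrightarrow> R' x y) \<Longrightarrow> strict_linear_on S R \<longleftrightarrow> strict_linear_on S R'"
  unfolding strict_linear_on_def by simp

lemma strict_linear_on_strict_mono_iff:
  fixes g :: "'a \<Rightarrow> 'b::linorder"
  assumes R: "strict_linear_on S R" and mono: "\<And>x y. x \<in> S \<Longrightarrow> y \<in> S \<Longrightarrow> R x y \<Longrightarrow> g x < g y"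
    and "x \<in> S" "y \<in> S"
  shows "R x y \<longleftrightarrow> g x < g y"
  using assms unfolding strict_linear_on_def by (metis less_asym less_irrefl)

definition rank :: "'a set \<Rightarrow> ('a \<Rightarrow> 'a \<Rightarrow> bool) \<Rightarrow> 'a \<Rightarrow> nat" where
  "rank S R x = card {y\<in>S. R y x}"

lemma rank_strict_mono:
  assumes "strict_linear_on S R" "finite S" "x \<in> S" "y \<in> S" "R x y"
  shows "rank S R x < rank S R y"
proof -
  have "{z\<in>S. R z x} \<subset> {z\<in>S. R z y}"
    using assms unfolding strict_linear_on_def by blast
  then show ?thesis
    unfolding rank_def using assms(2) by (simp add: psubset_card_mono)
qed

lemma less_if_near_less_nat:
  fixes a b :: "'a::linordered_field"
  assumes "m < n" "a < of_nat m + 1/2" "of_nat n - 1/2 < b"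
  shows "a < b"
proof -
  have "of_nat m + 1 \<le> (of_nat n :: 'a)"
    using assms(1) by (metis Suc_eq_plus1 Suc_leI of_nat_1 of_nat_add of_nat_le_iff)
  then show ?thesis
    using assms(2,3) by (simp add: field_simps)
qed

lemma finite_separating_interval:
  fixes L U :: "'a::{linorder, no_top, no_bot} set"
  assumes L: "finite L" and U: "finite U" and below: "\<And>l u. l \<in> L \<Longrightarrow> u \<in> U \<Longrightarrow> l < u"
  shows "\<exists>lo hi. lo < hi \<and> (\<forall>l\<in>L. l \<le> lo) \<and> (\<forall>u\<in>U. hi \<le> u)"
proof (cases "L = {}"; cases "U = {}")
  assume "L = {}" "U = {}"
  moreover obtain hi :: 'a where "undefined < hi" using gt_ex by blast
  ultimately show ?thesis by blast
next
  assume "L = {}" "U \<noteq> {}"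
  moreover obtain lo where "lo < Min U" using lt_ex by blast
  ultimately show ?thesis using U by (intro exI[of _ lo] exI[of _ "Min U"]) auto
next
  assume "L \<noteq> {}" "U = {}"
  moreover obtain hi where "Max L < hi" using gt_ex by blast
  ultimately show ?thesis using L by (intro exI[of _ "Max L"] exI[of _ hi]) auto
next
  assume "L \<noteq> {}" "U \<noteq> {}"
  then have "Max L < Min U" using L U below by simp
  then show ?thesis using L U by (intro exI[of _ "Max L"] exI[of _ "Min U"]) auto
qed

lemma order_preserving_pairs_interpolate:
  fixes P :: "('a::linorder \<times> 'b::{linorder, no_top, no_bot}) set"
  assumes fin: "finite P"
    and mono: "\<And>u v u' v'. (u, v) \<in> P \<Longrightarrow> (u', v') \<in> P \<Longrightarrow> u < u' \<longleftrightarrow> v < v'"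
    and a: "a \<notin> fst ` P"
  shows "\<exists>lo hi. lo < hi \<and> (\<forall>d u v. lo < d \<longrightarrow> d < hi \<longrightarrow> (u, v) \<in> P \<longrightarrow>
           (u < a \<longleftrightarrow> v < d) \<and> (a < u \<longleftrightarrow> d < v))"
proof -
  define L where "L = snd ` {p\<in>P. fst p < a}"
  define U where "U = snd ` {p\<in>P. a < fst p}"
  have LU: "l < u" if lu: "l \<in> L" "u \<in> U" for l u
  proof -
    obtain a1 a2 where P12: "(a1, l) \<in> P" "(a2, u) \<in> P" and "a1 < a" "a < a2"
      using lu unfolding L_def U_def by force
    then have "a1 < a2" by order
    with mono[OF P12] show ?thesis by simp
  qed
  have "finite L" "finite U"
    unfolding L_def U_def using fin by simp_all
  from finite_separating_interval[OF this LU]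
  obtain lo hi where "lo < hi" and lo: "\<forall>l\<in>L. l \<le> lo" and hi: "\<forall>u\<in>U. hi \<le> u"
    by blast
  moreover have "(u < a \<longleftrightarrow> v < d) \<and> (a < u \<longleftrightarrow> d < v)"
    if "lo < d" "d < hi" "(u, v) \<in> P" for d u v
  proof (cases "u < a")
    case True
    then have "v \<in> L" unfolding L_def using \<open>(u, v) \<in> P\<close> by force
    then show ?thesis using True lo \<open>lo < d\<close> by force
  next
    case False
    then have "a < u" using a \<open>(u, v) \<in> P\<close> by force
    then have "v \<in> U" unfolding U_def using \<open>(u, v) \<in> P\<close> by force
    then show ?thesis using \<open>a < u\<close> hi \<open>d < hi\<close> by force
  qed
  ultimately show ?thesis by blast
qed

lemma fun_eq_iff_if_same_order:
  fixes x x' :: "'n \<Rightarrow> 'a::linorder" and y y' :: "'n \<Rightarrow> 'b::linorder"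
  assumes "\<And>i. x i < x' i \<longleftrightarrow> y i < y' i" "\<And>i. x' i < x i \<longleftrightarrow> y' i < y i"
  shows "x = x' \<longleftrightarrow> y = y'"
proof -
  have "x i = x' i \<longleftrightarrow> y i = y' i" for i
    using assms[of i] by (metis less_irrefl linorder_neqE)
  then show ?thesis
    unfolding fun_eq_iff by blast
qed

section \<open>Partial orders with realizers\<close>

definition po_with_realizers :: "('a, 'n option) struct \<Rightarrow> bool" where
  "po_with_realizers A \<longleftrightarrow>
     (\<forall>i. strict_linear_on (carrier A) (rel A (Some i))) \<and>
     (\<forall>x\<in>carrier A. \<forall>y\<in>carrier A. rel A None x y \<longleftrightarrow> (\<forall>i. rel A (Some i) x y))"

lemma in_PO_iff: "in_PO A \<longleftrightarrow> finite (carrier A) \<and> po_with_realizers A"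
  by (auto simp: in_PO_def po_with_realizers_def)

lemma po_with_realizers_embedding:
  assumes B: "po_with_realizers B" and f: "embedding f A B"
  shows "po_with_realizers A"
proof -
  have into: "f ` carrier A \<subseteq> carrier B" and inj: "inj_on f (carrier A)"
    and rel: "\<And>r x y. x \<in> carrier A \<Longrightarrow> y \<in> carrier A \<Longrightarrow> rel A r x y \<longleftrightarrow> rel B r (f x) (f y)"
    using f unfolding embedding_def by auto
  have "strict_linear_on (carrier A) (rel A (Some i))" for i
  proof -
    have "strict_linear_on (carrier A) (\<lambda>x y. rel B (Some i) (f x) (f y))"
      using strict_linear_on_inj_on[OF _ into inj] B unfolding po_with_realizers_def by blast
    then show ?thesis
      using strict_linear_on_cong[of "carrier A" "rel A (Some i)"] rel by auto
  qed
  moreover have "rel A None x y \<longleftrightarrow> (\<forall>i. rel A (Some i) x y)"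
    if "x \<in> carrier A" "y \<in> carrier A" for x y
    using B into that rel[OF that] unfolding po_with_realizers_def by (simp add: image_subset_iff)
  ultimately show ?thesis
    unfolding po_with_realizers_def by blast
qed

lemma embedding_po_with_realizers_iff:
  assumes A: "po_with_realizers A" and M: "po_with_realizers M"
  shows "embedding f A M \<longleftrightarrow> f ` carrier A \<subseteq> carrier M \<and>
    (\<forall>i. \<forall>x\<in>carrier A. \<forall>y\<in>carrier A. rel A (Some i) x y \<longleftrightarrow> rel M (Some i) (f x) (f y))"
    (is "_ \<longleftrightarrow> ?into \<and> ?pres")
proof
  assume "?into \<and> ?pres"
  then have into: ?into and pres: ?pres by blast+
  have "inj_on f (carrier A)"
  proof (rule inj_onI, rule ccontr)
    fix x y assume "x \<in> carrier A" "y \<in> carrier A" "f x = f y" "x \<noteq> y"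
    moreover have "\<not> rel M (Some i) (f x) (f x)" for i
      using M into \<open>x \<in> carrier A\<close> unfolding po_with_realizers_def strict_linear_on_def by blast
    ultimately show False
      using A pres unfolding po_with_realizers_def strict_linear_on_def by metis
  qed
  moreover have "rel A None x y \<longleftrightarrow> rel M None (f x) (f y)"
    if "x \<in> carrier A" "y \<in> carrier A" for x y
    using A M into pres that unfolding po_with_realizers_def by (simp add: image_subset_iff)
  ultimately show "embedding f A M"
    using into pres unfolding embedding_def by (metis option.exhaust)
qed (auto simp: embedding_def)

section \<open>The structure \<open>D\<close>\<close>

definition coordinatewise_distinct :: "('n \<Rightarrow> 'b) set \<Rightarrow> bool" where
  "coordinatewise_distinct D \<longleftrightarrow> (\<forall>a\<in>D. \<forall>b\<in>D. a \<noteq> b \<longrightarrow> (\<forall>i. a i \<noteq> b i))"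

lemma carrier_Dstruct [simp]: "carrier (Dstruct D) = D"
  by (simp add: carrier_def Dstruct_def)

lemma rel_Dstruct_Some [simp]: "rel (Dstruct D) (Some i) a b \<longleftrightarrow> a i < b i"
  by (simp add: rel_def Dstruct_def)

lemma rel_Dstruct_None:
  assumes "coordinatewise_distinct D" "a \<in> D" "b \<in> D"
  shows "rel (Dstruct D) None a b \<longleftrightarrow> (\<forall>i. a i < b i)"
  using assms unfolding coordinatewise_distinct_def
  by (auto simp: rel_def Dstruct_def order.strict_iff_order)

lemma po_with_realizers_Dstruct:
  assumes "coordinatewise_distinct D"
  shows "po_with_realizers (Dstruct D)"
  using assms rel_Dstruct_None[OF assms]
  unfolding po_with_realizers_def strict_linear_on_def coordinatewise_distinct_def
  by (auto simp: linorder_neq_iff)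

lemma in_PO_imp_in_age_Dstruct:
  fixes D :: "('n \<Rightarrow> rat) set"
  assumes nc: "coordinatewise_distinct D" and dense: "dense_in_Qn D" and A: "in_PO A"
  shows "in_age (Dstruct D) A"
proof -
  let ?r = "\<lambda>i. rank (carrier A) (rel A (Some i))"
  have "\<exists>d\<in>D. \<forall>i. of_nat (?r i x) - 1/2 < d i \<and> d i < of_nat (?r i x) + 1/2" for x
    using dense unfolding dense_in_Qn_def by simp
  then obtain f where fD: "\<And>x. f x \<in> D"
    and near: "\<And>x i. of_nat (?r i x) - 1/2 < f x i \<and> f x i < of_nat (?r i x) + 1/2"
    by metis
  have lin: "strict_linear_on (carrier A) (rel A (Some i))" and fin: "finite (carrier A)" for i
    using A unfolding in_PO_def by blast+
  have "rel A (Some i) x y \<longleftrightarrow> f x i < f y i" if "x \<in> carrier A" "y \<in> carrier A" for x y i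
    using strict_linear_on_strict_mono_iff[OF lin _ that]
      rank_strict_mono[OF lin fin] less_if_near_less_nat near by meson
  then have "embedding f A (Dstruct D)"
    using A fD po_with_realizers_Dstruct[OF nc]
    by (simp add: embedding_po_with_realizers_iff in_PO_iff image_subset_iff)
  then show ?thesis
    using fin unfolding in_age_def by blast
qed

lemma in_age_Dstruct_iff:
  assumes "coordinatewise_distinct D" "dense_in_Qn D"
  shows "in_age (Dstruct D) A \<longleftrightarrow> in_PO A"
  using assms in_PO_imp_in_age_Dstruct po_with_realizers_embedding po_with_realizers_Dstruct
  unfolding in_age_def in_PO_iff by blast

lemma partial_iso_graph_Dstruct_iff:
  assumes nc: "coordinatewise_distinct D"
  shows "partial_iso_graph (Dstruct D) P \<longleftrightarrow> P \<subseteq> D \<times> D \<and>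
    (\<forall>x y x' y' i. (x, y) \<in> P \<longrightarrow> (x', y') \<in> P \<longrightarrow> x i < x' i \<longleftrightarrow> y i < y' i)"
    (is "_ \<longleftrightarrow> ?sub \<and> ?coord")
proof
  assume P: "partial_iso_graph (Dstruct D) P"
  show "?sub \<and> ?coord"
    using partial_iso_graph_subset[OF P] partial_iso_graph_rel_iff[OF P, where r = "Some _"]
    by simp
next
  assume "?sub \<and> ?coord"
  then have sub: ?sub and coord: ?coord by blast+
  show "partial_iso_graph (Dstruct D) P"
  proof (rule partial_iso_graphI)
    show "P \<subseteq> carrier (Dstruct D) \<times> carrier (Dstruct D)" using sub by simp
  next
    fix x y x' y' assume xy: "(x, y) \<in> P" and xy': "(x', y') \<in> P"
    then have D: "x \<in> D" "x' \<in> D" "y \<in> D" "y' \<in> D" using sub by auto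
    have "x = x' \<longleftrightarrow> y = y'"
      using coord xy xy' by (intro fun_eq_iff_if_same_order) blast+
    moreover have "rel (Dstruct D) r x x' \<longleftrightarrow> rel (Dstruct D) r y y'" for r
      using coord xy xy' rel_Dstruct_None[OF nc] D by (cases r) simp_all
    ultimately show "(x = x' \<longleftrightarrow> y = y') \<and> (\<forall>r. rel (Dstruct D) r x x' \<longleftrightarrow> rel (Dstruct D) r y y')"
      by blast
  qed
qed

lemma extension_property_Dstruct:
  fixes D :: "('n \<Rightarrow> rat) set"
  assumes nc: "coordinatewise_distinct D" and dense: "dense_in_Qn D"
  shows "extension_property (Dstruct D)"
  unfolding extension_property_def carrier_Dstruct
proof (intro allI impI, elim conjE)
  fix P a assume P: "finite P" "partial_iso_graph (Dstruct D) P" and a: "a \<in> D" "a \<notin> fst ` P"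
  have sub: "P \<subseteq> D \<times> D"
    and coord: "\<And>x y x' y' i. (x, y) \<in> P \<Longrightarrow> (x', y') \<in> P \<Longrightarrow> x i < x' i \<longleftrightarrow> y i < y' i"
    using P(2) unfolding partial_iso_graph_Dstruct_iff[OF nc] by blast+
  let ?P = "\<lambda>i. (\<lambda>(x, y). (x i, y i)) ` P"
  have "\<exists>lo hi. lo < hi \<and> (\<forall>d u v. lo < d \<longrightarrow> d < hi \<longrightarrow> (u, v) \<in> ?P i \<longrightarrow>
           (u < a i \<longleftrightarrow> v < d) \<and> (a i < u \<longleftrightarrow> d < v))" for i
  proof (rule order_preserving_pairs_interpolate)
    show "finite (?P i)" using P(1) by simp
    show "u < u' \<longleftrightarrow> v < v'" if "(u, v) \<in> ?P i" "(u', v') \<in> ?P i" for u v u' v'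
      using that coord by auto
    show "a i \<notin> fst ` ?P i"
    proof
      assume "a i \<in> fst ` ?P i"
      then obtain x y where "(x, y) \<in> P" "x i = a i" by force
      moreover have "x \<noteq> a" using a(2) \<open>(x, y) \<in> P\<close> by force
      ultimately show False using nc sub a(1) unfolding coordinatewise_distinct_def by blast
    qed
  qed
  then obtain lo hi where "\<And>i. lo i < hi i" and interpolate: "\<And>i d u v. lo i < d \<Longrightarrow> d < hi i \<Longrightarrow>
      (u, v) \<in> ?P i \<Longrightarrow> (u < a i \<longleftrightarrow> v < d) \<and> (a i < u \<longleftrightarrow> d < v)"
    by metis
  then obtain b where b: "b \<in> D" "\<And>i. lo i < b i \<and> b i < hi i"
    using dense unfolding dense_in_Qn_def by blast
  have "x i < a i \<longleftrightarrow> y i < b i" "a i < x i \<longleftrightarrow> b i < y i" if "(x, y) \<in> P" for x y i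
    using interpolate[of i "b i" "x i" "y i"] b(2) that by force+
  then have "partial_iso_graph (Dstruct D) (insert (a, b) P)"
    unfolding partial_iso_graph_Dstruct_iff[OF nc] using sub coord a(1) b(1) by auto
  then show "\<exists>b. partial_iso_graph (Dstruct D) (insert (a, b) P)" by blast
qed

lemma ultrahomogeneous_Dstruct:
  fixes D :: "('n::finite \<Rightarrow> rat) set"
  assumes "coordinatewise_distinct D" "dense_in_Qn D"
  shows "ultrahomogeneous (Dstruct D)"
  by (rule ultrahomogeneous_if_extension_property) (simp_all add: extension_property_Dstruct[OF assms])

theorem theorem3p2:
  fixes D :: "('n::finite \<Rightarrow> rat) set"
  assumes n2: "CARD('n) \<ge> 2"
    and dense: "dense_in_Qn D"
    and nocommon: "\<forall>a\<in>D. \<forall>b\<in>D. a \<noteq> b \<longrightarrow> (\<forall>i. a i \<noteq> b i)"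
  shows
    \<comment> \<open>ultrahomogeneity and age\<close>
    "ultrahomogeneous (Dstruct D) \<and>
     (\<forall>A :: ('a, 'n option) struct. in_age (Dstruct D) A \<longleftrightarrow> in_PO A) \<and>
     \<comment> \<open>PO is a Fraisse class: nonempty, HP, JEP, AP\<close>
     (\<exists>A :: (nat, 'n option) struct. in_PO A) \<and>
     (\<forall>(A :: ('a, 'n option) struct) (B :: ('b, 'n option) struct) f.
        in_PO B \<and> finite (carrier A) \<and> embedding f A B \<longrightarrow> in_PO A) \<and>
     (\<forall>(A :: ('a, 'n option) struct) (B :: ('b, 'n option) struct).
        in_PO A \<and> in_PO B \<longrightarrow>
        (\<exists>(C :: (nat, 'n option) struct) g h. in_PO C \<and> embedding g A C \<and> embedding h B C)) \<and>
     (\<forall>(A :: ('a, 'n option) struct) (B :: ('b, 'n option) struct)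
        (C :: ('c, 'n option) struct) e f.
        in_PO A \<and> in_PO B \<and> in_PO C \<and> embedding e A B \<and> embedding f A C \<longrightarrow>
        (\<exists>(E :: (nat, 'n option) struct) g h. in_PO E \<and> embedding g B E \<and> embedding h C E \<and>
            (\<forall>x\<in>carrier A. g (e x) = h (f x)))) \<and>
     \<comment> \<open>D is the Fraisse limit: countable, ultrahomogeneous, with age PO\<close>
     countable (carrier (Dstruct D))"
proof -
  have nc: "coordinatewise_distinct D"
    using nocommon unfolding coordinatewise_distinct_def .
  note age = in_age_Dstruct_iff[OF nc dense]
  have ultra: "ultrahomogeneous (Dstruct D)"
    using ultrahomogeneous_Dstruct[OF nc dense] .
  have "in_PO (({}, \<lambda>_ _ _. False) :: (nat, 'n option) struct)"
    by (simp add: in_PO_def carrier_def strict_linear_on_def)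
  moreover have "in_PO A" if "in_PO B" "finite (carrier A)" "embedding f A B"
    for A :: "('a, 'n option) struct" and B :: "('b, 'n option) struct" and f
    using that po_with_realizers_embedding[of B f A] by (simp add: in_PO_iff)
  moreover note age_joint_embedding_property[of "Dstruct D"]
    age_amalgamation_property[OF ultra]
  ultimately show ?thesis
    using ultra by (simp add: age) blast
qed

end
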